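(* Let $N\ge1$ be an integer, $d>0$, $T>0$, and $0\le s_1\le\dots\le s_N$. Let $x^*$ be the optimal solution of the (assumed feasible) problem $$\min_{x\in\mathbb{R}^{N+1}}\ \sum_{i=1}^{N+1}x_i^2$$ subject to - $\sum_{i=1}^k x_i\ge s_k+kd$ for $1\le k\le N$, - $x_i\ge 2d$ for $2\le i\le N$, - $x_{N+1}\ge d$, - $\sum_{i=1}^{N+1}x_i=T+Nd$. Then $x_1^*>x_2^*$ only if $x_1^*=s_1+d$, and $x_1^*<x_2^*$ only if $x_i^*=2d$ for all $2\le i\le N$.
   Context: The problem arises from age-of-information minimization for a single energy harvesting transmitter with energy arrival times $s_k$, fixed service time $d$, and session length $T$. Its objective is strictly convex, so the optimal solution is unique. *)

theory Defs
  imports Complex_Main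
begin

text \<open>Vectors x in R^(N+1) are represented as functions nat => real, using indices 1..N+1;
  arrival times s_1..s_N as s 1 .. s N.\<close>

definition aoi_feasible :: "nat \<Rightarrow> real \<Rightarrow> real \<Rightarrow> (nat \<Rightarrow> real) \<Rightarrow> (nat \<Rightarrow> real) \<Rightarrow> bool" where
  "aoi_feasible N d T s x \<longleftrightarrow>
     (\<forall>k\<in>{1..N}. (\<Sum>i=1..k. x i) \<ge> s k + real k * d) \<and>
     (\<forall>i\<in>{2..N}. x i \<ge> 2 * d) \<and>
     x (N + 1) \<ge> d \<and>
     (\<Sum>i=1..N+1. x i) = T + real N * d"

definition aoi_optimal :: "nat \<Rightarrow> real \<Rightarrow> real \<Rightarrow> (nat \<Rightarrow> real) \<Rightarrow> (nat \<Rightarrow> real) \<Rightarrow> bool" where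
  "aoi_optimal N d T s x \<longleftrightarrow>
     aoi_feasible N d T s x \<and>
     (\<forall>y. aoi_feasible N d T s y \<longrightarrow> (\<Sum>i=1..N+1. (x i)\<^sup>2) \<le> (\<Sum>i=1..N+1. (y i)\<^sup>2))"

end

theory Submission
  imports Defs
begin

text \<open>Exchange argument: moving an amount \<open>0 < e < x\<^sub>a - x\<^sub>b\<close> from a larger coordinate \<open>x\<^sub>a\<close> to a
  smaller one \<open>x\<^sub>b\<close> keeps the total and lowers the sum of squares by \<open>2e(x\<^sub>a - x\<^sub>b - e)\<close>, so no such
  move may stay feasible at the optimum.  If \<open>x\<^sub>1 > x\<^sub>2\<close> and the first prefix constraint is slack,
  moving a little from \<open>x\<^sub>1\<close> to \<open>x\<^sub>2\<close> is feasible; if \<open>x\<^sub>1 < x\<^sub>2\<close> and some \<open>x\<^sub>i > 2d\<close>, then some such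
  \<open>x\<^sub>i\<close> also exceeds \<open>x\<^sub>1\<close>, and moving a little from \<open>x\<^sub>i\<close> to \<open>x\<^sub>1\<close> only raises prefix sums.\<close>

definition mass_shift :: "('i \<Rightarrow> 'a::ab_group_add) \<Rightarrow> 'i \<Rightarrow> 'i \<Rightarrow> 'a \<Rightarrow> 'i \<Rightarrow> 'a" where
  "mass_shift x a b e = x(a := x a - e, b := x b + e)"

lemma mass_shift_apply:
  assumes "a \<noteq> b"
  shows "mass_shift x a b e i = x i + (if i = b then e else 0) - (if i = a then e else 0)"
  using assms by (simp add: mass_shift_def)

lemma sum_mass_shift:
  assumes "finite S" and "a \<noteq> b"
  shows "sum (mass_shift x a b e) S = sum x S + (if b \<in> S then e else 0) - (if a \<in> S then e else 0)"
  using assms by (simp add: mass_shift_apply sum.distrib sum_subtractf)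

lemma sum_remove_pair:
  assumes "finite S" and "a \<in> S" and "b \<in> S" and "a \<noteq> b"
  shows "sum f S = f a + f b + sum f (S - {a, b})"
proof -
  have "sum f S = f a + sum f (S - {a})"
    using assms by (simp add: sum.remove)
  also have "sum f (S - {a}) = f b + sum f (S - {a} - {b})"
    using assms by (simp add: sum.remove)
  finally show ?thesis
    by (simp add: Diff_insert2 [symmetric] add.assoc)
qed

lemma sum_squares_mass_shift:
  fixes x :: "'i \<Rightarrow> real"
  assumes "finite S" and "a \<in> S" and "b \<in> S" and "a \<noteq> b"
  shows "(\<Sum>i\<in>S. (mass_shift x a b e i)\<^sup>2) = (\<Sum>i\<in>S. (x i)\<^sup>2) - 2 * e * (x a - x b - e)"
proof -
  have "(\<Sum>i\<in>S - {a, b}. (mass_shift x a b e i)\<^sup>2) = (\<Sum>i\<in>S - {a, b}. (x i)\<^sup>2)"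
    by (rule sum.cong) (auto simp: mass_shift_def)
  then show ?thesis
    using assms by (simp add: sum_remove_pair[of S a b] mass_shift_def power2_eq_square algebra_simps)
qed

lemma sum_squares_mass_shift_less:
  fixes x :: "'i \<Rightarrow> real"
  assumes "finite S" and "a \<in> S" and "b \<in> S" and "a \<noteq> b" and "0 < e" and "e < x a - x b"
  shows "(\<Sum>i\<in>S. (mass_shift x a b e i)\<^sup>2) < (\<Sum>i\<in>S. (x i)\<^sup>2)"
  using assms by (simp add: sum_squares_mass_shift)

lemma aoi_optimal_mass_shift_infeasible:
  assumes "aoi_optimal N d T s x"
    and "a \<in> {1..N+1}" and "b \<in> {1..N+1}" and "a \<noteq> b" and "0 < e" and "e < x a - x b"
  shows "\<not> aoi_feasible N d T s (mass_shift x a b e)"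
  using assms sum_squares_mass_shift_less[of "{1..N+1}" a b e x]
  unfolding aoi_optimal_def by force

lemma aoi_feasible_mass_shift_first_to_second:
  assumes "aoi_feasible N d T s x" and "N \<ge> 1" and "0 \<le> e" and "e \<le> x 1 - (s 1 + d)"
  shows "aoi_feasible N d T s (mass_shift x 1 2 e)"
  unfolding aoi_feasible_def
proof (intro conjI ballI)
  fix k assume k: "k \<in> {1..N}"
  show "(\<Sum>i=1..k. mass_shift x 1 2 e i) \<ge> s k + real k * d"
  proof (cases "k = 1")
    case True
    then show ?thesis using assms(4) by (simp add: mass_shift_apply)
  next
    case False
    then show ?thesis using assms(1) k by (simp add: sum_mass_shift aoi_feasible_def)
  qed
next
  fix i assume i: "i \<in> {2..N}"
  then have "x i \<ge> 2 * d"
    using assms(1) by (simp add: aoi_feasible_def)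
  then show "mass_shift x 1 2 e i \<ge> 2 * d"
    using assms(3) i by (auto simp: mass_shift_def)
next
  show "mass_shift x 1 2 e (N + 1) \<ge> d"
    using assms(1-3) by (auto simp: mass_shift_def aoi_feasible_def numeral_2_eq_2)
next
  show "(\<Sum>i=1..N+1. mass_shift x 1 2 e i) = T + real N * d"
    using assms(1,2) by (subst sum_mass_shift) (auto simp: aoi_feasible_def)
qed

lemma aoi_feasible_mass_shift_to_first:
  assumes "aoi_feasible N d T s x" and "j \<in> {2..N}" and "0 \<le> e" and "e \<le> x j - 2 * d"
  shows "aoi_feasible N d T s (mass_shift x j 1 e)"
  unfolding aoi_feasible_def
proof (intro conjI ballI)
  fix k assume k: "k \<in> {1..N}"
  have "(\<Sum>i=1..k. x i) \<ge> s k + real k * d"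
    using assms(1) k by (simp add: aoi_feasible_def)
  moreover have "(\<Sum>i=1..k. mass_shift x j 1 e i) \<ge> (\<Sum>i=1..k. x i)"
    using assms(2,3) k by (simp add: sum_mass_shift)
  ultimately show "(\<Sum>i=1..k. mass_shift x j 1 e i) \<ge> s k + real k * d"
    by linarith
next
  fix i assume "i \<in> {2..N}"
  then show "mass_shift x j 1 e i \<ge> 2 * d"
    using assms by (auto simp: mass_shift_def aoi_feasible_def)
next
  show "mass_shift x j 1 e (N + 1) \<ge> d"
    using assms(1,2) by (auto simp: mass_shift_def aoi_feasible_def)
next
  show "(\<Sum>i=1..N+1. mass_shift x j 1 e i) = T + real N * d"
    using assms(1,2) by (subst sum_mass_shift) (auto simp: aoi_feasible_def)
qed

lemma aoi_optimal_first_tight: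
  assumes "aoi_optimal N d T s x" and "N \<ge> 1" and "x 1 > x 2"
  shows "x 1 = s 1 + d"
proof (rule ccontr)
  have feasible: "aoi_feasible N d T s x"
    using assms(1) by (simp add: aoi_optimal_def)
  then have "x 1 \<ge> s 1 + d"
    using assms(2) by (force simp: aoi_feasible_def)
  moreover assume "x 1 \<noteq> s 1 + d"
  ultimately have "x 1 > s 1 + d" by simp
  define e where "e = min ((x 1 - x 2) / 2) (x 1 - (s 1 + d))"
  have "0 < e" "e < x 1 - x 2" "e \<le> x 1 - (s 1 + d)"
    using \<open>x 1 > s 1 + d\<close> assms(3) by (auto simp: e_def min_def)
  then show False
    using aoi_optimal_mass_shift_infeasible[OF assms(1), of 1 2 e]
      aoi_feasible_mass_shift_first_to_second[OF feasible assms(2)] assms(2)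
    by auto
qed

lemma aoi_optimal_middle_tight:
  assumes "aoi_optimal N d T s x" and "x 1 < x 2" and "i \<in> {2..N}"
  shows "x i = 2 * d"
proof (rule ccontr)
  have feasible: "aoi_feasible N d T s x"
    using assms(1) by (simp add: aoi_optimal_def)
  assume "x i \<noteq> 2 * d"
  then have "x i > 2 * d"
    using feasible assms(3) by (force simp: aoi_feasible_def)
  have "\<exists>j\<in>{2..N}. x j > 2 * d \<and> x j > x 1"
  proof (cases "x 2 > 2 * d")
    case True
    then show ?thesis using assms(2,3) by (intro bexI[of _ 2]) auto
  next
    case False
    then have "x 2 = 2 * d" using feasible assms(3) by (force simp: aoi_feasible_def)
    then show ?thesis using \<open>x i > 2 * d\<close> assms(2,3) by (intro bexI[of _ i]) auto
  qed
  then obtain j where j: "j \<in> {2..N}" "x j > 2 * d" "x j > x 1" by blast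
  define e where "e = min ((x j - x 1) / 2) (x j - 2 * d)"
  have "0 < e" "e < x j - x 1" "e \<le> x j - 2 * d"
    using j by (auto simp: e_def min_def)
  then show False
    using aoi_optimal_mass_shift_infeasible[OF assms(1), of j 1 e]
      aoi_feasible_mass_shift_to_first[OF feasible j(1), of e] j(1)
    by auto
qed

theorem lemma2:
  fixes N :: nat and d T :: real and s x :: "nat \<Rightarrow> real"
  assumes "N \<ge> 1" and "d > 0" and "T > 0"
    and "0 \<le> s 1" and "\<forall>k\<in>{1..<N}. s k \<le> s (Suc k)"
    and "aoi_optimal N d T s x"
  shows "(x 1 > x 2 \<longrightarrow> x 1 = s 1 + d) \<and>
         (x 1 < x 2 \<longrightarrow> (\<forall>i\<in>{2..N}. x i = 2 * d))"
  using aoi_optimal_first_tight[OF assms(6,1)] aoi_optimal_middle_tight[OF assms(6)]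
  by blast

end
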